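(* Let $X$ be a compact metric space, $T\colon X\to X$ continuous, and $x\in X$. If $\nu\in V^{\log}(x)$ is an ergodic $T$-invariant measure, then $\nu\in V(x)$.
   Context: For $N\ge1$ let $\mathrm{Emp}(x,N)=\frac1N\sum_{n=1}^N\delta_{T^{n-1}(x)}$, and for $N\ge2$ let $\mathrm{Emp}^{\log}(x,N)=\frac1{\log N}\sum_{n=1}^N\frac1n\delta_{T^{n-1}(x)}$. $V(x)$ is the set of Borel probability measures $\nu$ on $X$ such that $\mathrm{Emp}(x,N_k)\to\nu$ weak-$*$ for some increasing sequence $(N_k)$; $V^{\log}(x)$ is the set of Borel probability measures $\nu$ such that $\mathrm{Emp}^{\log}(x,N_k)\to\nu$ weak-$*$ for some increasing sequence $(N_k)$. *)

theory Defs
  imports "HOL-Probability.Probability"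
begin

definition borel_prob :: "'a::metric_space measure \<Rightarrow> bool" where
  "borel_prob \<nu> \<longleftrightarrow> prob_space \<nu> \<and> sets \<nu> = sets borel"

text \<open>Weak-* convergence of a sequence of (finite Borel) measures: convergence of the
  integrals of every continuous real function (all of which are bounded on a compact space).\<close>
definition weak_star_conv :: "(nat \<Rightarrow> 'a::metric_space measure) \<Rightarrow> 'a measure \<Rightarrow> bool" where
  "weak_star_conv \<mu> \<nu> \<longleftrightarrow>
     (\<forall>f :: 'a \<Rightarrow> real. continuous_on UNIV f \<longrightarrow>
        (\<lambda>k. integral\<^sup>L (\<mu> k) f) \<longlonglongrightarrow> integral\<^sup>L \<nu> f)"

definition Emp :: "('a::metric_space \<Rightarrow> 'a) \<Rightarrow> 'a \<Rightarrow> nat \<Rightarrow> 'a measure" where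
  "Emp T x N = measure_of UNIV (sets borel)
     (\<lambda>A. ennreal ((1 / real N) * (\<Sum>n<N. indicator A ((T ^^ n) x))))"

text \<open>Emp^log(x,N) = (1/log N) sum_{n=1}^N (1/n) delta_{T^{n-1} x}.\<close>
definition Emp_log :: "('a::metric_space \<Rightarrow> 'a) \<Rightarrow> 'a \<Rightarrow> nat \<Rightarrow> 'a measure" where
  "Emp_log T x N = measure_of UNIV (sets borel)
     (\<lambda>A. ennreal ((1 / ln (real N)) * (\<Sum>n<N. (1 / real (Suc n)) * indicator A ((T ^^ n) x))))"

definition V :: "('a::metric_space \<Rightarrow> 'a) \<Rightarrow> 'a \<Rightarrow> 'a measure set" where
  "V T x = {\<nu>. borel_prob \<nu> \<and>
     (\<exists>Ns :: nat \<Rightarrow> nat. strict_mono Ns \<and> (\<forall>k. Ns k \<ge> 1) \<and>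
        weak_star_conv (\<lambda>k. Emp T x (Ns k)) \<nu>)}"

definition V_log :: "('a::metric_space \<Rightarrow> 'a) \<Rightarrow> 'a \<Rightarrow> 'a measure set" where
  "V_log T x = {\<nu>. borel_prob \<nu> \<and>
     (\<exists>Ns :: nat \<Rightarrow> nat. strict_mono Ns \<and> (\<forall>k. Ns k \<ge> 2) \<and>
        weak_star_conv (\<lambda>k. Emp_log T x (Ns k)) \<nu>)}"

definition T_invariant :: "('a::metric_space \<Rightarrow> 'a) \<Rightarrow> 'a measure \<Rightarrow> bool" where
  "T_invariant T \<nu> \<longleftrightarrow> T \<in> measurable \<nu> \<nu> \<and> distr \<nu> \<nu> T = \<nu>"

definition ergodic :: "('a::metric_space \<Rightarrow> 'a) \<Rightarrow> 'a measure \<Rightarrow> bool" where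
  "ergodic T \<nu> \<longleftrightarrow> T_invariant T \<nu> \<and>
     (\<forall>A \<in> sets \<nu>. T -` A \<inter> space \<nu> = A \<longrightarrow> measure \<nu> A = 0 \<or> measure \<nu> A = 1)"

end

theory Submission
  imports Defs
begin

text \<open>
  Write \<open>A\<^sub>n f\<close> for the Birkhoff averages \<open>(1/n) \<Sum>\<^sub>t\<^sub><\<^sub>n f \<circ> T\<^sup>t\<close>. Birkhoff's ergodic
  theorem (proved below for continuous observables from the maximal ergodic inequality) shows
  that for every finite family \<open>F\<close> of continuous functions the continuous function
  \<open>h\<^sub>M = \<Sum>\<^sub>f\<^sub>\<in>\<^sub>F \<bar>A\<^sub>M f - \<integral>f d\<nu>\<bar>\<close> has \<open>\<integral>h\<^sub>M d\<nu> \<rightarrow> 0\<close>. As \<open>\<nu>\<close> is a limit of logarithmic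
  empirical measures of \<open>x\<close>, the logarithmic averages of \<open>h\<^sub>M\<close> along the orbit of \<open>x\<close> are small
  along the defining sequence, and summation by parts turns this into arbitrarily late times
  \<open>n\<close> at which the Cesaro average of \<open>h\<^sub>M\<close> along the orbit is small. At such \<open>n\<close> every
  \<open>A\<^sub>n f x\<close> with \<open>f \<in> F\<close> is close to \<open>\<integral>f d\<nu>\<close>, because replacing \<open>f\<close> by \<open>A\<^sub>M f\<close> changes
  \<open>A\<^sub>n f x\<close> only by \<open>O(M/n)\<close>. A diagonal argument over a countable dense family of continuous
  functions yields times \<open>n\<^sub>k\<close> with \<open>Emp(x, n\<^sub>k) \<rightarrow> \<nu>\<close>.
\<close>

section \<open>Birkhoff sums\<close>

definition birkhoff_sum :: "('a \<Rightarrow> 'a) \<Rightarrow> ('a \<Rightarrow> real) \<Rightarrow> nat \<Rightarrow> 'a \<Rightarrow> real" where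
  "birkhoff_sum T f n y = (\<Sum>t<n. f ((T ^^ t) y))"

lemma birkhoff_sum_0 [simp]: "birkhoff_sum T f 0 y = 0"
  by (simp add: birkhoff_sum_def)

lemma birkhoff_sum_Suc_shift: "birkhoff_sum T f (Suc n) y = f y + birkhoff_sum T f n (T y)"
  unfolding birkhoff_sum_def
  by (subst sum.lessThan_Suc_shift) (simp add: funpow_Suc_right del: funpow.simps)

lemma birkhoff_sum_diff:
  "birkhoff_sum T (\<lambda>y. f y - g y) n y = birkhoff_sum T f n y - birkhoff_sum T g n y"
  unfolding birkhoff_sum_def by (simp add: sum_subtractf)

lemma birkhoff_sum_const [simp]: "birkhoff_sum T (\<lambda>_. c) n y = real n * c"
  by (simp add: birkhoff_sum_def)

lemma birkhoff_sum_abs_le: "(\<And>y. \<bar>f y\<bar> \<le> B) \<Longrightarrow> \<bar>birkhoff_sum T f n y\<bar> \<le> real n * B"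
proof -
  assume B: "\<And>y. \<bar>f y\<bar> \<le> B"
  have "\<bar>birkhoff_sum T f n y\<bar> \<le> (\<Sum>t<n. \<bar>f ((T ^^ t) y)\<bar>)"
    unfolding birkhoff_sum_def by (rule sum_abs)
  also have "\<dots> \<le> (\<Sum>t<n. B)"
    using B by (intro sum_mono) auto
  finally show ?thesis by simp
qed

lemma birkhoff_sum_funpow: "birkhoff_sum T f m ((T ^^ s) y) = (\<Sum>t<m. f ((T ^^ (s + t)) y))"
  unfolding birkhoff_sum_def by (simp add: funpow_add add.commute)

lemma continuous_on_funpow:
  fixes T :: "'a::topological_space \<Rightarrow> 'a"
  assumes "continuous_on UNIV T"
  shows "continuous_on UNIV (T ^^ n)"
proof (induction n)
  case 0
  then show ?case by (simp add: id_def continuous_on_id)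
next
  case (Suc n)
  then show ?case
    using continuous_on_compose[OF Suc, of T] assms by (auto simp: o_def continuous_on_subset)
qed

lemma continuous_on_birkhoff_sum:
  assumes "continuous_on UNIV T" "continuous_on UNIV f"
  shows "continuous_on UNIV (birkhoff_sum T f n)"
proof -
  have "continuous_on UNIV (\<lambda>y. f ((T ^^ t) y))" for t
    using continuous_on_compose[OF continuous_on_funpow[OF assms(1)], where g=f] assms(2)
    by (simp add: o_def continuous_on_subset)
  then show ?thesis
    unfolding birkhoff_sum_def by (intro continuous_on_sum) auto
qed

primrec birkhoff_max :: "('a \<Rightarrow> 'a) \<Rightarrow> ('a \<Rightarrow> real) \<Rightarrow> nat \<Rightarrow> 'a \<Rightarrow> real" where
  "birkhoff_max T f 0 y = 0"
| "birkhoff_max T f (Suc n) y = max (birkhoff_max T f n y) (birkhoff_sum T f (Suc n) y)"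

lemma birkhoff_sum_le_birkhoff_max: "k \<le> n \<Longrightarrow> birkhoff_sum T f k y \<le> birkhoff_max T f n y"
proof (induction n)
  case (Suc n)
  then show ?case
    by (cases "k = Suc n") (simp_all add: le_max_iff_disj)
qed simp

lemma birkhoff_max_attained: "\<exists>k\<le>n. birkhoff_max T f n y = birkhoff_sum T f k y"
proof (induction n)
  case (Suc n)
  then show ?case
    by (metis birkhoff_max.simps(2) le_SucI max.absorb1 max.absorb2 nle_le order_refl)
qed simp

lemma birkhoff_max_nonneg: "0 \<le> birkhoff_max T f n y"
  using birkhoff_sum_le_birkhoff_max[of 0 n T f y] by simp

lemma birkhoff_max_le_shift:
  assumes "0 < birkhoff_max T f n y"
  shows "birkhoff_max T f n y \<le> f y + birkhoff_max T f n (T y)"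
proof -
  obtain k where k: "k \<le> n" "birkhoff_max T f n y = birkhoff_sum T f k y"
    using birkhoff_max_attained[of n T f y] by blast
  have "k \<noteq> 0"
    using assms k(2) by (metis birkhoff_sum_0 less_irrefl)
  then obtain j where j: "k = Suc j"
    using not0_implies_Suc by blast
  have "birkhoff_sum T f j (T y) \<le> birkhoff_max T f n (T y)"
    using k(1) j by (intro birkhoff_sum_le_birkhoff_max) simp
  then show ?thesis
    using k(2) unfolding j birkhoff_sum_Suc_shift by linarith
qed

lemma incseq_birkhoff_max_positive: "incseq (\<lambda>n. {y. 0 < birkhoff_max T f n y})"
proof (rule incseq_SucI)
  show "{y. 0 < birkhoff_max T f n y} \<subseteq> {y. 0 < birkhoff_max T f (Suc n) y}" for n
    using less_le_trans[OF _ max.cobounded1] by auto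
qed

lemma UN_birkhoff_max_positive:
  "(\<Union>n. {y. 0 < birkhoff_max T f n y}) = {y. \<exists>k. 0 < birkhoff_sum T f k y}"
proof (intro set_eqI iffI)
  fix y
  assume "y \<in> (\<Union>n. {y. 0 < birkhoff_max T f n y})"
  then obtain n where "0 < birkhoff_max T f n y"
    by blast
  moreover obtain k where "birkhoff_max T f n y = birkhoff_sum T f k y"
    using birkhoff_max_attained[of n T f y] by blast
  ultimately show "y \<in> {y. \<exists>k. 0 < birkhoff_sum T f k y}"
    by auto
next
  fix y
  assume "y \<in> {y. \<exists>k. 0 < birkhoff_sum T f k y}"
  then obtain k where "0 < birkhoff_sum T f k y"
    by blast
  then have "0 < birkhoff_max T f k y"
    using birkhoff_sum_le_birkhoff_max[of k k T f y] by simp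
  then show "y \<in> (\<Union>n. {y. 0 < birkhoff_max T f n y})"
    by blast
qed

lemma continuous_on_birkhoff_max:
  assumes "continuous_on UNIV T" "continuous_on UNIV f"
  shows "continuous_on UNIV (birkhoff_max T f n)"
proof (induction n)
  case (Suc n)
  have "continuous_on UNIV (\<lambda>y. max (birkhoff_max T f n y) (birkhoff_sum T f (Suc n) y))"
    by (intro continuous_on_max Suc continuous_on_birkhoff_sum assms)
  then show ?case
    by simp
qed (simp add: continuous_on_const)

lemma open_birkhoff_sum_positive:
  assumes "continuous_on UNIV T" "continuous_on UNIV g"
  shows "open {y. \<exists>k. 0 < birkhoff_sum T g k y}"
proof -
  have "{y. \<exists>k. 0 < birkhoff_sum T g k y} = (\<Union>k. {y. 0 < birkhoff_sum T g k y})"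
    by blast
  then show ?thesis
    using continuous_on_birkhoff_sum[OF assms]
    by (auto intro!: open_Collect_less continuous_on_const)
qed

lemma bdd_above_birkhoff_sum_shift:
  "bdd_above (range (\<lambda>k. birkhoff_sum T g k (T y))) \<longleftrightarrow>
   bdd_above (range (\<lambda>k. birkhoff_sum T g k y))"
proof
  assume "bdd_above (range (\<lambda>k. birkhoff_sum T g k (T y)))"
  then obtain M where M: "\<And>k. birkhoff_sum T g k (T y) \<le> M"
    by (auto simp: bdd_above_def)
  have "birkhoff_sum T g k y \<le> max 0 (g y + M)" for k
    using M by (cases k) (auto simp: birkhoff_sum_Suc_shift le_max_iff_disj)
  then show "bdd_above (range (\<lambda>k. birkhoff_sum T g k y))"
    by (rule bdd_aboveI2)
next
  assume "bdd_above (range (\<lambda>k. birkhoff_sum T g k y))"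
  then obtain M where M: "\<And>k. birkhoff_sum T g k y \<le> M"
    by (auto simp: bdd_above_def)
  have "birkhoff_sum T g k (T y) \<le> M - g y" for k
    using M[of "Suc k"] by (simp add: birkhoff_sum_Suc_shift)
  then show "bdd_above (range (\<lambda>k. birkhoff_sum T g k (T y)))"
    by (rule bdd_aboveI2)
qed

lemma continuous_bounded:
  fixes g :: "'a::metric_space \<Rightarrow> real"
  assumes "compact (UNIV :: 'a set)" "continuous_on UNIV g"
  obtains B where "0 < B" "\<And>y. \<bar>g y\<bar> \<le> B"
proof -
  have "bounded (range g)"
    using assms by (intro compact_imp_bounded compact_continuous_image)
  then obtain B where "\<forall>z\<in>range g. norm z \<le> B"
    unfolding bounded_iff by blast
  then have "\<bar>g y\<bar> \<le> max B 1" for y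
    by (metis UNIV_I image_eqI le_max_iff_disj real_norm_def)
  then show ?thesis
    using that[of "max B 1"] by simp
qed

lemma continuous_bounded_finite_family:
  fixes F :: "('a::metric_space \<Rightarrow> real) set"
  assumes "compact (UNIV :: 'a set)" "finite F" "\<And>f. f \<in> F \<Longrightarrow> continuous_on UNIV f"
  obtains B where "0 < B" "\<And>f y. f \<in> F \<Longrightarrow> \<bar>f y\<bar> \<le> B"
proof -
  have "continuous_on UNIV (\<lambda>y. \<Sum>f\<in>F. \<bar>f y\<bar>)"
    using assms(3) by (intro continuous_intros) auto
  then obtain B where "0 < B" and B: "\<And>y. \<bar>\<Sum>f\<in>F. \<bar>f y\<bar>\<bar> \<le> B"
    using continuous_bounded[OF assms(1)] by blast
  moreover have "\<bar>f y\<bar> \<le> B" if "f \<in> F" for f y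
    using member_le_sum[of f F "\<lambda>f. \<bar>f y\<bar>"] B[of y] that assms(2) by auto
  ultimately show ?thesis
    using that by blast
qed

lemma bdd_above_range_iff_nat:
  fixes s :: "nat \<Rightarrow> real"
  shows "bdd_above (range s) \<longleftrightarrow> (\<exists>m::nat. \<forall>k. s k \<le> real m)"
proof
  assume "bdd_above (range s)"
  then obtain M where "\<And>k. s k \<le> M"
    by (auto simp: bdd_above_def)
  moreover obtain m :: nat where "M \<le> real m"
    using real_arch_simple by blast
  ultimately show "\<exists>m::nat. \<forall>k. s k \<le> real m"
    by (meson order_trans)
qed (auto intro: bdd_aboveI2)

lemma LIMSEQ_average_of_bdd_above:
  fixes s :: "nat \<Rightarrow> real"
  assumes upper: "\<And>j. bdd_above (range (\<lambda>k. s k - real k * (c + inverse (real (Suc j)))))"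
    and lower: "\<And>j. bdd_above (range (\<lambda>k. real k * (c - inverse (real (Suc j))) - s k))"
  shows "(\<lambda>k. s k / real k) \<longlonglongrightarrow> c"
proof (rule LIMSEQ_I)
  fix r :: real
  assume r: "0 < r"
  obtain j where j: "inverse (real (Suc j)) < r / 2"
    using reals_Archimedean[of "r / 2"] r by auto
  define e where "e = inverse (real (Suc j))"
  obtain C1 C2 where C1: "\<And>k. s k - real k * (c + e) \<le> C1"
    and C2: "\<And>k. real k * (c - e) - s k \<le> C2"
    using upper[of j] lower[of j] unfolding e_def bdd_above_def by blast
  define C where "C = max (max C1 C2) 0"
  have "C1 \<le> C" "C2 \<le> C"
    by (simp_all add: C_def)
  then have C: "\<bar>s k - real k * c\<bar> \<le> real k * e + C" for k
    using C1[of k] C2[of k] unfolding abs_le_iff by (auto simp: algebra_simps)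
  obtain K :: nat where K: "2 * C / r < real K"
    using reals_Archimedean2 by blast
  show "\<exists>K. \<forall>k\<ge>K. norm (s k / real k - c) < r"
  proof (intro exI allI impI)
    fix k
    assume k: "Suc K \<le> k"
    then have k_pos: "0 < real k"
      by simp
    have "2 * C < r * real K"
      using K r by (simp add: divide_less_eq mult.commute)
    also have "\<dots> \<le> r * real k"
      using k r by simp
    finally have "C / real k < r / 2"
      using k_pos by (simp add: divide_less_eq field_simps)
    have "norm (s k / real k - c) = \<bar>s k - real k * c\<bar> / real k"
      using k_pos by (simp add: field_simps abs_divide)
    also have "\<dots> \<le> (real k * e + C) / real k"
      using C[of k] k_pos by (simp add: divide_right_mono)
    also have "\<dots> = e + C / real k"
      using k_pos by (simp add: field_simps)
    also have "\<dots> < r"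
      using j \<open>C / real k < r / 2\<close> unfolding e_def by linarith
    finally show "norm (s k / real k - c) < r" .
  qed
qed

section \<open>Birkhoff's ergodic theorem for continuous observables\<close>

locale compact_ergodic_system =
  fixes T :: "'a::metric_space \<Rightarrow> 'a" and \<nu> :: "'a measure"
  assumes compact_UNIV: "compact (UNIV :: 'a set)"
    and continuous_T: "continuous_on UNIV T"
    and borel_prob: "borel_prob \<nu>"
    and ergodic: "ergodic T \<nu>"
begin

sublocale prob_space \<nu>
  using borel_prob unfolding borel_prob_def by simp

lemma sets_eq_borel [measurable_cong]: "sets \<nu> = sets borel"
  using borel_prob unfolding borel_prob_def by simp

lemma space_eq_UNIV: "space \<nu> = UNIV"
  using sets_eq_imp_space_eq[OF sets_eq_borel] by simp

lemma measurable_continuous: "continuous_on UNIV g \<Longrightarrow> g \<in> borel_measurable \<nu>"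
  using borel_measurable_continuous_onI measurable_cong_sets[OF sets_eq_borel refl] by blast

lemma integrable_bounded:
  fixes g :: "'a \<Rightarrow> real"
  shows "g \<in> borel_measurable \<nu> \<Longrightarrow> (\<And>y. \<bar>g y\<bar> \<le> B) \<Longrightarrow> integrable \<nu> g"
  by (rule integrable_const_bound[where B=B]) auto

lemma integrable_continuous:
  fixes g :: "'a \<Rightarrow> real"
  assumes "continuous_on UNIV g"
  shows "integrable \<nu> g"
proof -
  obtain B where "\<And>y. \<bar>g y\<bar> \<le> B"
    using continuous_bounded[OF compact_UNIV assms] by blast
  then show ?thesis
    using integrable_bounded measurable_continuous[OF assms] by blast
qed

lemma integral_compose_T:
  fixes g :: "'a \<Rightarrow> real"
  assumes "continuous_on UNIV g"
  shows "integral\<^sup>L \<nu> (\<lambda>y. g (T y)) = integral\<^sup>L \<nu> g"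
proof -
  have "T \<in> measurable \<nu> \<nu>" "distr \<nu> \<nu> T = \<nu>"
    using ergodic unfolding ergodic_def T_invariant_def by auto
  then show ?thesis
    using integral_distr[of T \<nu> \<nu> g] measurable_continuous[OF assms] by simp
qed

lemma integral_abs_diff_le:
  fixes f g :: "'a \<Rightarrow> real"
  assumes "continuous_on UNIV f" "continuous_on UNIV g" "\<And>y. \<bar>f y - g y\<bar> \<le> r"
  shows "\<bar>integral\<^sup>L \<nu> f - integral\<^sup>L \<nu> g\<bar> \<le> r"
proof -
  have fg: "integrable \<nu> (\<lambda>y. f y - g y)"
    using assms(1,2) integrable_continuous by simp
  have "\<bar>integral\<^sup>L \<nu> (\<lambda>y. f y - g y)\<bar> \<le> integral\<^sup>L \<nu> (\<lambda>y. \<bar>f y - g y\<bar>)"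
    by (rule integral_abs_bound)
  also have "\<dots> \<le> integral\<^sup>L \<nu> (\<lambda>_. r)"
    using fg assms(3) by (intro integral_mono) auto
  finally show ?thesis
    using assms(1,2) integrable_continuous by (simp add: prob_space)
qed

lemma integrable_indicator_times:
  fixes g :: "'a \<Rightarrow> real"
  assumes "open A" "continuous_on UNIV g"
  shows "integrable \<nu> (\<lambda>y. indicator A y * g y)"
proof -
  obtain B where "0 < B" "\<And>y. \<bar>g y\<bar> \<le> B"
    using continuous_bounded[OF compact_UNIV assms(2)] by blast
  then have "\<bar>indicator A y * g y\<bar> \<le> B" for y
    by (simp add: indicator_def)
  moreover have "A \<in> sets \<nu>"
    using assms(1) by (simp add: sets_eq_borel)
  then have "(\<lambda>y. indicator A y * g y) \<in> borel_measurable \<nu>"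
    using assms(2) by (intro borel_measurable_times borel_measurable_indicator measurable_continuous)
  ultimately show ?thesis
    by (intro integrable_bounded)
qed

lemma integral_indicator_birkhoff_max_nonneg:
  fixes g :: "'a \<Rightarrow> real"
  assumes g: "continuous_on UNIV g"
  shows "0 \<le> integral\<^sup>L \<nu> (\<lambda>y. indicator {y. 0 < birkhoff_max T g n y} y * g y)"
proof -
  let ?M = "birkhoff_max T g n"
  have M: "continuous_on UNIV ?M"
    by (rule continuous_on_birkhoff_max[OF continuous_T g])
  then have MT: "continuous_on UNIV (\<lambda>y. ?M (T y))"
    using continuous_on_compose2[OF M continuous_T] by simp
  have open_pos: "open {y. 0 < ?M y}"
    using M by (auto intro!: open_Collect_less continuous_on_const)
  have pointwise: "?M y - ?M (T y) \<le> indicator {y. 0 < ?M y} y * g y" for y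
    using birkhoff_max_le_shift[of T g n y] birkhoff_max_nonneg[of T g n y]
      birkhoff_max_nonneg[of T g n "T y"]
    by (cases "0 < ?M y") auto
  have "0 = integral\<^sup>L \<nu> ?M - integral\<^sup>L \<nu> (\<lambda>y. ?M (T y))"
    using integral_compose_T[OF M] by simp
  also have "\<dots> = integral\<^sup>L \<nu> (\<lambda>y. ?M y - ?M (T y))"
    using integrable_continuous[OF M] integrable_continuous[OF MT] by simp
  also have "\<dots> \<le> integral\<^sup>L \<nu> (\<lambda>y. indicator {y. 0 < ?M y} y * g y)"
    using integrable_continuous[OF M] integrable_continuous[OF MT] pointwise
      integrable_indicator_times[OF open_pos g]
    by (intro integral_mono) auto
  finally show ?thesis .
qed

theorem maximal_ergodic_inequality:
  fixes g :: "'a \<Rightarrow> real"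
  assumes g: "continuous_on UNIV g"
  shows "0 \<le> integral\<^sup>L \<nu> (\<lambda>y. indicator {y. \<exists>k. 0 < birkhoff_sum T g k y} y * g y)"
proof -
  let ?A = "\<lambda>n. {y. 0 < birkhoff_max T g n y}"
  obtain B where B: "0 < B" "\<And>y. \<bar>g y\<bar> \<le> B"
    using continuous_bounded[OF compact_UNIV g] by blast
  have open_A: "open (?A n)" for n
    using continuous_on_birkhoff_max[OF continuous_T g]
    by (auto intro!: open_Collect_less continuous_on_const)
  then have open_U: "open (\<Union>n. ?A n)"
    by blast
  have "(\<lambda>n. integral\<^sup>L \<nu> (\<lambda>y. indicator (?A n) y * g y)) \<longlonglongrightarrow>
      integral\<^sup>L \<nu> (\<lambda>y. indicator (\<Union>n. ?A n) y * g y)"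
  proof (rule integral_dominated_convergence[where w="\<lambda>_. B"])
    show "AE y in \<nu>. (\<lambda>n. indicator (?A n) y * g y) \<longlonglongrightarrow> indicator (\<Union>n. ?A n) y * g y"
      using LIMSEQ_indicator_incseq[OF incseq_birkhoff_max_positive]
      by (intro AE_I2 tendsto_mult_right)
    show "AE y in \<nu>. norm (indicator (?A n) y * g y) \<le> B" for n
      using B by (simp add: indicator_def)
  qed (use integrable_indicator_times[OF open_A g] integrable_indicator_times[OF open_U g]
      integrable_bounded[of "\<lambda>_. B" B] B(1) in auto)
  then show ?thesis
    unfolding UN_birkhoff_max_positive
    by (rule LIMSEQ_le_const) (use integral_indicator_birkhoff_max_nonneg[OF g] in auto)
qed

text \<open>
  The set where the Birkhoff sums of \<open>g\<close> are unbounded above is invariant, so by ergodicity it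
  is null or conull; if it were conull, the maximal ergodic inequality would give
  \<open>\<integral>g d\<nu> \<ge> 0\<close>.
\<close>

lemma AE_bdd_above_birkhoff_sum:
  fixes g :: "'a \<Rightarrow> real"
  assumes g: "continuous_on UNIV g" and neg: "integral\<^sup>L \<nu> g < 0"
  shows "AE y in \<nu>. bdd_above (range (\<lambda>k. birkhoff_sum T g k y))"
proof -
  let ?F = "{y. \<not> bdd_above (range (\<lambda>k. birkhoff_sum T g k y))}"
  let ?E = "{y. \<exists>k. 0 < birkhoff_sum T g k y}"
  have [measurable]: "birkhoff_sum T g k \<in> borel_measurable \<nu>" for k
    by (rule measurable_continuous[OF continuous_on_birkhoff_sum[OF continuous_T g]])
  have "{y \<in> space \<nu>. \<not> (\<exists>m::nat. \<forall>k. birkhoff_sum T g k y \<le> real m)} \<in> sets \<nu>"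
    by measurable
  then have F_sets: "?F \<in> sets \<nu>"
    by (simp add: space_eq_UNIV bdd_above_range_iff_nat)
  have "T -` ?F \<inter> space \<nu> = ?F"
    by (auto simp: space_eq_UNIV bdd_above_birkhoff_sum_shift)
  then have "prob ?F = 0 \<or> prob ?F = 1"
    using ergodic F_sets unfolding ergodic_def by blast
  moreover have "prob ?F \<noteq> 1"
  proof
    assume "prob ?F = 1"
    then have "AE y in \<nu>. y \<in> ?F"
      by (rule AE_prob_1)
    moreover have "?F \<subseteq> ?E"
      by (auto simp: bdd_above_def not_le intro: ccontr)
    ultimately have "AE y in \<nu>. indicator ?E y * g y = g y"
      by (auto elim!: eventually_mono dest!: subsetD simp: indicator_def)
    then have "integral\<^sup>L \<nu> (\<lambda>y. indicator ?E y * g y) = integral\<^sup>L \<nu> g"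
      using integrable_indicator_times[OF open_birkhoff_sum_positive[OF continuous_T g] g]
        integrable_continuous[OF g]
      by (intro integral_cong_AE) auto
    then show False
      using maximal_ergodic_inequality[OF g] neg by simp
  qed
  ultimately have "?F \<in> null_sets \<nu>"
    using F_sets by (auto intro!: null_setsI simp: emeasure_eq_measure)
  then show ?thesis
    by (auto dest: AE_not_in)
qed

theorem AE_birkhoff_average_tendsto:
  fixes f :: "'a \<Rightarrow> real"
  assumes f: "continuous_on UNIV f"
  shows "AE y in \<nu>. (\<lambda>k. birkhoff_sum T f k y / real k) \<longlonglongrightarrow> integral\<^sup>L \<nu> f"
proof -
  let ?c = "integral\<^sup>L \<nu> f"
  let ?e = "\<lambda>j. inverse (real (Suc j))"
  have "AE y in \<nu>. bdd_above (range (\<lambda>k. birkhoff_sum T (\<lambda>y. f y - (?c + ?e j)) k y))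
      \<and> bdd_above (range (\<lambda>k. birkhoff_sum T (\<lambda>y. (?c - ?e j) - f y) k y))" for j
    using f integrable_continuous[OF f]
    by (intro AE_conjI AE_bdd_above_birkhoff_sum) (auto intro!: continuous_intros simp: prob_space)
  then have "AE y in \<nu>. \<forall>j. bdd_above (range (\<lambda>k. birkhoff_sum T (\<lambda>y. f y - (?c + ?e j)) k y))
      \<and> bdd_above (range (\<lambda>k. birkhoff_sum T (\<lambda>y. (?c - ?e j) - f y) k y))"
    by (simp add: AE_all_countable)
  then show ?thesis
    by (rule AE_mp) (auto simp: birkhoff_sum_diff intro!: LIMSEQ_average_of_bdd_above)
qed

theorem birkhoff_average_L1_tendsto:
  fixes f :: "'a \<Rightarrow> real"
  assumes f: "continuous_on UNIV f"
  shows "(\<lambda>n. integral\<^sup>L \<nu> (\<lambda>y. \<bar>birkhoff_sum T f n y / real n - integral\<^sup>L \<nu> f\<bar>)) \<longlonglongrightarrow> 0"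
proof -
  let ?c = "integral\<^sup>L \<nu> f"
  obtain B where B: "0 < B" "\<And>y. \<bar>f y\<bar> \<le> B"
    using continuous_bounded[OF compact_UNIV f] by blast
  have average_bound: "\<bar>birkhoff_sum T f n y / real n\<bar> \<le> B" for n y
    using birkhoff_sum_abs_le[of f B T n y] B
    by (cases "n = 0") (auto simp: abs_divide divide_le_eq mult.commute)
  have "(\<lambda>n. integral\<^sup>L \<nu> (\<lambda>y. \<bar>birkhoff_sum T f n y / real n - ?c\<bar>)) \<longlonglongrightarrow>
      integral\<^sup>L \<nu> (\<lambda>_. 0)"
  proof (rule integral_dominated_convergence[where w="\<lambda>_. B + \<bar>?c\<bar>"])
    show "AE y in \<nu>. (\<lambda>n. \<bar>birkhoff_sum T f n y / real n - ?c\<bar>) \<longlonglongrightarrow> 0"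
      using AE_birkhoff_average_tendsto[OF f]
      by eventually_elim (simp add: tendsto_rabs_zero LIM_zero)
    show "AE y in \<nu>. norm \<bar>birkhoff_sum T f n y / real n - ?c\<bar> \<le> B + \<bar>?c\<bar>" for n
    proof (rule AE_I2)
      fix y
      have "\<bar>birkhoff_sum T f n y / real n - ?c\<bar> \<le> \<bar>birkhoff_sum T f n y / real n\<bar> + \<bar>?c\<bar>"
        by (rule abs_triangle_ineq4)
      then show "norm \<bar>birkhoff_sum T f n y / real n - ?c\<bar> \<le> B + \<bar>?c\<bar>"
        using average_bound[of n y] by simp
    qed
    show "(\<lambda>y. \<bar>birkhoff_sum T f n y / real n - ?c\<bar>) \<in> borel_measurable \<nu>" for n
      using measurable_continuous[OF continuous_on_birkhoff_sum[OF continuous_T f]] by measurable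
  qed (use integrable_bounded[of "\<lambda>_. B + \<bar>?c\<bar>" "B + \<bar>?c\<bar>"] B in auto)
  then show ?thesis
    by simp
qed

end

section \<open>Logarithmic and moving averages\<close>

lemma summation_by_parts_harmonic:
  fixes a :: "nat \<Rightarrow> real"
  assumes "1 \<le> N"
  shows "(\<Sum>n<N. a n / real (Suc n)) =
    (\<Sum>t<N. a t) / real N + (\<Sum>n\<in>{1..<N}. (\<Sum>t<n. a t) / (real n * real (Suc n)))"
  using assms
proof (induction N rule: dec_induct)
  case (step N)
  have N: "0 < real N"
    using step.hyps by simp
  have "(\<Sum>t<N. a t) / real N =
      (\<Sum>t<N. a t) / real (Suc N) + (\<Sum>t<N. a t) / (real N * real (Suc N))"
    using N by (simp add: divide_simps) (simp add: algebra_simps)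
  moreover have "(\<Sum>n\<in>{1..<Suc N}. (\<Sum>t<n. a t) / (real n * real (Suc n))) =
      (\<Sum>n\<in>{1..<N}. (\<Sum>t<n. a t) / (real n * real (Suc n))) +
      (\<Sum>t<N. a t) / (real N * real (Suc N))"
    using step.hyps by (simp add: sum.atLeastLessThan_Suc)
  moreover have "(\<Sum>t<Suc N. a t) / real (Suc N) = (\<Sum>t<N. a t) / real (Suc N) + a N / real (Suc N)"
    by (simp add: add_divide_distrib)
  ultimately show ?case
    using step.IH by simp
qed simp

lemma harmonic_weighted_sum_lower_bound:
  fixes a :: "nat \<Rightarrow> real"
  assumes "1 \<le> N0" and nonneg: "\<And>n. 0 \<le> a n"
    and big: "\<And>n. N0 \<le> n \<Longrightarrow> n < N \<Longrightarrow> \<theta> * real n \<le> (\<Sum>t<n. a t)"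
  shows "\<theta> * (\<Sum>n\<in>{N0..<N}. 1 / real (Suc n)) \<le> (\<Sum>n<N. a n / real (Suc n))"
proof (cases "N0 < N")
  case False
  then show ?thesis
    using nonneg by (simp add: sum_nonneg)
next
  case True
  have partial_nonneg: "0 \<le> (\<Sum>t<n. a t)" for n
    using nonneg by (simp add: sum_nonneg)
  have "\<theta> * (\<Sum>n\<in>{N0..<N}. 1 / real (Suc n)) =
      (\<Sum>n\<in>{N0..<N}. \<theta> * real n / (real n * real (Suc n)))"
    unfolding sum_distrib_left using assms(1) by (intro sum.cong) auto
  also have "\<dots> \<le> (\<Sum>n\<in>{N0..<N}. (\<Sum>t<n. a t) / (real n * real (Suc n)))"
    using big by (intro sum_mono divide_right_mono) auto
  also have "\<dots> \<le> (\<Sum>n\<in>{1..<N}. (\<Sum>t<n. a t) / (real n * real (Suc n)))"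
    using assms(1) partial_nonneg by (intro sum_mono2) auto
  also have "\<dots> \<le> (\<Sum>n<N. a n / real (Suc n))"
    using summation_by_parts_harmonic[of N a] True assms(1) partial_nonneg[of N] by simp
  finally show ?thesis .
qed

lemma harmonic_tail_lower_bound:
  assumes "N0 \<le> N"
  shows "ln (real N) - real N0 \<le> (\<Sum>n\<in>{N0..<N}. 1 / real (Suc n))"
proof -
  have harm: "(\<Sum>n<K. 1 / real (Suc n)) = harm K" for K
    unfolding harm_def by (induction K) (simp_all add: field_simps)
  have "(\<Sum>n<N. 1 / real (Suc n)) =
      (\<Sum>n<N0. 1 / real (Suc n)) + (\<Sum>n\<in>{N0..<N}. 1 / real (Suc n))"
    using assms by (metis sum.atLeastLessThan_concat zero_le atLeast0LessThan)
  moreover have "(\<Sum>n<N0. 1 / real (Suc n)) \<le> (\<Sum>n<N0. 1)"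
    by (intro sum_mono) auto
  moreover have "ln (real N) \<le> harm N"
  proof (cases "N = 0")
    case False
    then have "ln (real N) \<le> ln (real N + 1)"
      by simp
    then show ?thesis
      using ln_le_harm[of N] by linarith
  qed (simp add: harm_nonneg)
  ultimately show ?thesis
    using harm[of N] by simp
qed

text \<open>
  If all partial averages on \<open>[N\<^sub>1, N)\<close> were at least \<open>2\<eta>\<close>, summation by parts would bound the
  logarithmic average from below by \<open>2\<eta> (1 - N\<^sub>1 / ln N) > \<eta>\<close>.
\<close>

lemma exists_small_partial_sum:
  fixes a :: "nat \<Rightarrow> real"
  assumes nonneg: "\<And>n. 0 \<le> a n" and "1 \<le> N1" and N: "2 * real N1 < ln (real N)"
    and small: "(\<Sum>n<N. a n / real (Suc n)) < \<eta> * ln (real N)"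
  shows "\<exists>n. N1 \<le> n \<and> n < N \<and> (\<Sum>t<n. a t) < 2 * \<eta> * real n"
proof (rule ccontr)
  assume "\<not> ?thesis"
  then have big: "\<And>n. N1 \<le> n \<Longrightarrow> n < N \<Longrightarrow> 2 * \<eta> * real n \<le> (\<Sum>t<n. a t)"
    by (meson not_less)
  have ln_pos: "0 < ln (real N)"
    using N assms(2) by linarith
  have "0 \<le> (\<Sum>n<N. a n / real (Suc n))"
    using nonneg by (simp add: sum_nonneg)
  with small have "0 < \<eta> * ln (real N)"
    by linarith
  with ln_pos have \<eta>: "0 < \<eta>"
    by (simp add: zero_less_mult_iff)
  have "0 < real N"
    using ln_pos by (cases "N = 0") auto
  then have "N1 \<le> N"
    using N ln_less_self[of "real N"] ln_pos by linarith
  then have "2 * \<eta> * (ln (real N) - real N1) \<le> 2 * \<eta> * (\<Sum>n\<in>{N1..<N}. 1 / real (Suc n))"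
    using \<eta> by (intro mult_left_mono harmonic_tail_lower_bound) auto
  also have "\<dots> \<le> (\<Sum>n<N. a n / real (Suc n))"
    by (rule harmonic_weighted_sum_lower_bound[OF assms(2) nonneg big])
  finally have "2 * \<eta> * (ln (real N) - real N1) < \<eta> * ln (real N)"
    using small by linarith
  moreover have "\<eta> * ln (real N) < \<eta> * (2 * (ln (real N) - real N1))"
    using N \<eta> by (intro mult_strict_left_mono) auto
  ultimately show False
    by (simp add: algebra_simps)
qed

lemma sum_shift_diff_le:
  fixes a :: "nat \<Rightarrow> real"
  assumes B: "\<And>i. \<bar>a i\<bar> \<le> B"
  shows "\<bar>(\<Sum>s<n. a (s + t)) - (\<Sum>s<n. a s)\<bar> \<le> 2 * real t * B"
proof (induction t)
  case (Suc t)
  have "(\<Sum>s<Suc n. a (s + t)) = a t + (\<Sum>s<n. a (Suc s + t))"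
    by (subst sum.lessThan_Suc_shift) simp
  then have "(\<Sum>s<n. a (s + Suc t)) = (\<Sum>s<n. a (s + t)) + a (n + t) - a t"
    by simp
  then show ?case
    using Suc.IH B[of "n + t"] B[of t] unfolding abs_le_iff by (simp add: algebra_simps)
qed simp

lemma sum_moving_average_diff_le:
  fixes a :: "nat \<Rightarrow> real"
  assumes B: "\<And>i. \<bar>a i\<bar> \<le> B" and M: "0 < M"
  shows "\<bar>(\<Sum>s<n. (\<Sum>t<M. a (s + t)) / real M) - (\<Sum>s<n. a s)\<bar> \<le> 2 * real M * B"
proof -
  have B_nonneg: "0 \<le> B"
    using B[of 0] by linarith
  have "(\<Sum>s<n. (\<Sum>t<M. a (s + t)) / real M) = (\<Sum>t<M. \<Sum>s<n. a (s + t)) / real M"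
    by (simp add: sum_divide_distrib[symmetric] sum.swap[of _ "{..<n}"])
  then have "(\<Sum>s<n. (\<Sum>t<M. a (s + t)) / real M) - (\<Sum>s<n. a s) =
      (\<Sum>t<M. (\<Sum>s<n. a (s + t)) - (\<Sum>s<n. a s)) / real M"
    using M by (simp add: sum_subtractf diff_divide_distrib)
  also have "\<bar>\<dots>\<bar> \<le> (\<Sum>t<M. \<bar>(\<Sum>s<n. a (s + t)) - (\<Sum>s<n. a s)\<bar>) / real M"
    using sum_abs[of "\<lambda>t. (\<Sum>s<n. a (s + t)) - (\<Sum>s<n. a s)" "{..<M}"]
    by (simp add: abs_divide divide_right_mono)
  also have "\<dots> \<le> (\<Sum>t<M. 2 * real M * B) / real M"
  proof (intro divide_right_mono sum_mono)
    fix t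
    assume "t \<in> {..<M}"
    then have "2 * real t * B \<le> 2 * real M * B"
      using B_nonneg by (intro mult_right_mono) auto
    then show "\<bar>(\<Sum>s<n. a (s + t)) - (\<Sum>s<n. a s)\<bar> \<le> 2 * real M * B"
      using sum_shift_diff_le[where a=a and B=B and n=n and t=t, OF B] by linarith
  qed simp
  also have "\<dots> = 2 * real M * B"
    using M by simp
  finally show ?thesis .
qed

lemma birkhoff_sum_deviation_le:
  assumes B: "\<And>y. \<bar>f y\<bar> \<le> B" and M: "0 < M"
  shows "\<bar>birkhoff_sum T f n x - real n * c\<bar> \<le>
    2 * real M * B + (\<Sum>s<n. \<bar>birkhoff_sum T f M ((T ^^ s) x) / real M - c\<bar>)"
proof -
  have "\<bar>(\<Sum>s<n. birkhoff_sum T f M ((T ^^ s) x) / real M) - birkhoff_sum T f n x\<bar> \<le> 2 * real M * B"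
    unfolding birkhoff_sum_funpow unfolding birkhoff_sum_def
    using sum_moving_average_diff_le[where a="\<lambda>i. f ((T ^^ i) x)", OF B M] by (simp add: add.commute)
  moreover have "\<bar>\<Sum>s<n. birkhoff_sum T f M ((T ^^ s) x) / real M - c\<bar> \<le>
      (\<Sum>s<n. \<bar>birkhoff_sum T f M ((T ^^ s) x) / real M - c\<bar>)"
    by (rule sum_abs)
  ultimately show ?thesis
    unfolding sum_subtractf abs_le_iff by auto
qed

lemma birkhoff_average_close:
  assumes B: "\<And>y. \<bar>f y\<bar> \<le> B" and M: "0 < M" and n: "8 * real M * B < \<epsilon> * real n"
    and small: "(\<Sum>s<n. \<bar>birkhoff_sum T f M ((T ^^ s) x) / real M - c\<bar>) < \<epsilon> / 2 * real n"
  shows "\<bar>birkhoff_sum T f n x / real n - c\<bar> < \<epsilon>"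
proof -
  have n_pos: "0 < real n"
    using small by (cases "n = 0") auto
  have "\<bar>birkhoff_sum T f n x - real n * c\<bar> < \<epsilon> * real n"
    using birkhoff_sum_deviation_le[where f=f and B=B and M=M and T=T and n=n and x=x and c=c, OF B M]
      small n by linarith
  then show ?thesis
    using n_pos by (simp add: abs_divide divide_simps mult.commute)
qed

lemma birkhoff_average_abs_diff_le:
  assumes "\<And>y. \<bar>f y - g y\<bar> \<le> e"
  shows "\<bar>birkhoff_sum T f n x / real n - birkhoff_sum T g n x / real n\<bar> \<le> e"
proof -
  have "\<bar>birkhoff_sum T (\<lambda>y. f y - g y) n x\<bar> \<le> real n * e"
    by (rule birkhoff_sum_abs_le) (rule assms)
  moreover have "0 \<le> e"
    using assms[of x] by linarith
  ultimately show ?thesis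
    by (cases "n = 0") (auto simp: birkhoff_sum_diff diff_divide_distrib[symmetric] abs_divide
        divide_le_eq mult.commute)
qed

section \<open>Empirical measures\<close>

lemma weighted_point_measure_eq_distr:
  fixes p :: "nat \<Rightarrow> 'a::metric_space" and w :: "nat \<Rightarrow> real"
  assumes w: "\<And>n. n < N \<Longrightarrow> 0 \<le> w n"
  shows "measure_of UNIV (sets borel) (\<lambda>A. ennreal (\<Sum>n<N. w n * indicator A (p n)))
     = distr (density (count_space {..<N}) (\<lambda>n. ennreal (w n))) borel p"
    (is "_ = ?D")
proof -
  have "emeasure ?D A = ennreal (\<Sum>n<N. w n * indicator A (p n))" if A: "A \<in> sets borel" for A
  proof -
    have "emeasure ?D A = (\<Sum>n<N. ennreal (w n) * indicator (p -` A \<inter> {..<N}) n)"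
      using A by (simp add: emeasure_distr emeasure_density nn_integral_count_space_finite)
    also have "\<dots> = (\<Sum>n<N. ennreal (w n * indicator A (p n)))"
      by (intro sum.cong refl) (auto simp: indicator_def)
    also have "\<dots> = ennreal (\<Sum>n<N. w n * indicator A (p n))"
      using w by (intro sum_ennreal) (auto simp: indicator_def)
    finally show ?thesis .
  qed
  then have "measure_of UNIV (sets borel) (\<lambda>A. ennreal (\<Sum>n<N. w n * indicator A (p n)))
      = measure_of UNIV (sets borel) (emeasure ?D)"
    by (intro measure_of_eq) (auto simp: sets.sigma_sets_eq[of borel, simplified])
  also have "\<dots> = ?D"
    using measure_of_of_measure[of ?D] by simp
  finally show ?thesis .
qed

lemma integral_weighted_point_measure:
  fixes p :: "nat \<Rightarrow> 'a::metric_space" and w :: "nat \<Rightarrow> real" and f :: "'a \<Rightarrow> real"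
  assumes w: "\<And>n. n < N \<Longrightarrow> 0 \<le> w n" and f: "f \<in> borel_measurable borel"
  shows "integral\<^sup>L (measure_of UNIV (sets borel) (\<lambda>A. ennreal (\<Sum>n<N. w n * indicator A (p n)))) f
     = (\<Sum>n<N. w n * f (p n))"
proof -
  have "integral\<^sup>L (distr (density (count_space {..<N}) (\<lambda>n. ennreal (w n))) borel p) f
      = integral\<^sup>L (density (count_space {..<N}) (\<lambda>n. ennreal (w n))) (\<lambda>n. f (p n))"
    using f by (intro integral_distr) auto
  also have "\<dots> = integral\<^sup>L (count_space {..<N}) (\<lambda>n. w n *\<^sub>R f (p n))"
    using w by (intro integral_density) (auto simp: AE_count_space)
  also have "\<dots> = (\<Sum>n<N. w n * f (p n))"
    by (simp add: lebesgue_integral_count_space_finite)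
  finally show ?thesis
    by (simp only: weighted_point_measure_eq_distr[OF w])
qed

lemma integral_Emp:
  assumes "f \<in> borel_measurable borel"
  shows "integral\<^sup>L (Emp T x N) f = birkhoff_sum T f N x / real N"
proof -
  have "Emp T x N = measure_of UNIV (sets borel)
      (\<lambda>A. ennreal (\<Sum>n<N. (1 / real N) * indicator A ((T ^^ n) x)))"
    unfolding Emp_def by (simp add: sum_distrib_left)
  then show ?thesis
    using integral_weighted_point_measure[of N "\<lambda>_. 1 / real N" f "\<lambda>n. (T ^^ n) x"] assms
    by (simp add: birkhoff_sum_def sum_divide_distrib)
qed

lemma integral_Emp_log:
  assumes "f \<in> borel_measurable borel" and "1 \<le> N"
  shows "integral\<^sup>L (Emp_log T x N) f = (\<Sum>n<N. f ((T ^^ n) x) / real (Suc n)) / ln (real N)"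
proof -
  have "Emp_log T x N = measure_of UNIV (sets borel)
      (\<lambda>A. ennreal (\<Sum>n<N. (1 / ln (real N) * (1 / real (Suc n))) * indicator A ((T ^^ n) x)))"
    unfolding Emp_log_def by (simp add: sum_distrib_left mult.assoc)
  moreover have "0 \<le> ln (real N)"
    using assms(2) by simp
  ultimately show ?thesis
    using integral_weighted_point_measure[of N "\<lambda>n. 1 / ln (real N) * (1 / real (Suc n))" f
        "\<lambda>n. (T ^^ n) x"] assms(1)
    by (simp add: sum_divide_distrib mult.commute)
qed

lemma exists_small_birkhoff_sum:
  fixes h :: "'a \<Rightarrow> real"
  assumes h: "\<And>y. 0 \<le> h y" and N1: "1 \<le> N1" and Ns: "strict_mono Ns"
    and log_small: "eventually (\<lambda>k. (\<Sum>n<Ns k. h ((T ^^ n) x) / real (Suc n)) / ln (real (Ns k)) < \<eta>)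
      sequentially"
  shows "\<exists>n\<ge>N1. birkhoff_sum T h n x < 2 * \<eta> * real n"
proof -
  have "filterlim (\<lambda>k. ln (real (Ns k))) at_top sequentially"
    using filterlim_subseq[OF Ns]
    by (intro filterlim_compose[OF ln_at_top] filterlim_compose[OF filterlim_real_sequentially])
  then have "eventually (\<lambda>k. 2 * real N1 < ln (real (Ns k))) sequentially"
    by (simp add: filterlim_at_top_dense)
  from eventually_conj[OF log_small this] obtain k
    where small: "(\<Sum>n<Ns k. h ((T ^^ n) x) / real (Suc n)) / ln (real (Ns k)) < \<eta>"
      and big: "2 * real N1 < ln (real (Ns k))"
    unfolding eventually_sequentially by blast
  have "0 < ln (real (Ns k))"
    using big N1 by linarith
  with small have "(\<Sum>n<Ns k. h ((T ^^ n) x) / real (Suc n)) < \<eta> * ln (real (Ns k))"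
    by (simp add: divide_less_eq)
  then obtain n where "N1 \<le> n" "(\<Sum>t<n. h ((T ^^ t) x)) < 2 * \<eta> * real n"
    using exists_small_partial_sum[of "\<lambda>n. h ((T ^^ n) x)", OF h N1 big] by blast
  then show ?thesis
    unfolding birkhoff_sum_def by blast
qed

section \<open>A countable dense family of continuous functions\<close>

text \<open>
  With rational heights and centres in a countable dense set these envelopes are dense in
  the continuous functions.
\<close>

definition cone_min :: "nat \<Rightarrow> (real \<times> 'a::metric_space) set \<Rightarrow> 'a \<Rightarrow> real" where
  "cone_min L P y = Min ((\<lambda>(r, q). r + real L * dist y q) ` P)"

lemma cone_min_le:
  "finite P \<Longrightarrow> (r, q) \<in> P \<Longrightarrow> cone_min L P y \<le> r + real L * dist y q"
  unfolding cone_min_def by (rule Min_le) force+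

lemma cone_min_attained:
  assumes "finite P" "P \<noteq> {}"
  obtains r q where "(r, q) \<in> P" "cone_min L P y = r + real L * dist y q"
proof -
  have "cone_min L P y \<in> (\<lambda>(r, q). r + real L * dist y q) ` P"
    unfolding cone_min_def using assms by (intro Min_in) auto
  then show ?thesis
    using that by auto
qed

lemma continuous_on_cone_min:
  assumes "finite P" "P \<noteq> {}"
  shows "continuous_on UNIV (cone_min L P)"
  using assms
proof (induction P rule: finite_ne_induct)
  case (singleton p)
  then show ?case
    by (cases p) (simp add: cone_min_def, intro continuous_intros)
next
  case (insert p P)
  have "cone_min L (insert p P) = (\<lambda>y. min (fst p + real L * dist y (snd p)) (cone_min L P y))"
    using insert by (intro ext) (simp add: cone_min_def case_prod_beta)
  then show ?case
    using insert.IH by (simp, intro continuous_intros)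
qed

lemma cone_min_approximates:
  fixes f :: "'a::metric_space \<Rightarrow> real"
  assumes uc: "\<And>y z. dist z y < \<delta> \<Longrightarrow> \<bar>f z - f y\<bar> < e"
    and bound: "\<And>y. \<bar>f y\<bar> \<le> B" and L: "2 * B + e < real L * \<delta>"
    and Q: "finite Q" "\<And>y. \<exists>q\<in>Q. dist y q < \<delta> \<and> real L * dist y q \<le> e"
    and r: "\<And>q. q \<in> Q \<Longrightarrow> \<bar>r q - f q\<bar> < e"
  shows "\<bar>f y - cone_min L ((\<lambda>q. (r q, q)) ` Q) y\<bar> \<le> 3 * e"
proof -
  let ?P = "(\<lambda>q. (r q, q)) ` Q"
  obtain q where q: "q \<in> Q" "dist y q < \<delta>" "real L * dist y q \<le> e"
    using Q(2) by blast
  have "cone_min L ?P y \<le> r q + real L * dist y q"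
    using Q(1) q(1) by (intro cone_min_le) auto
  moreover have "\<bar>f q - f y\<bar> < e"
    using uc[of q y] q(2) by (simp add: dist_commute)
  ultimately have upper: "cone_min L ?P y \<le> f y + 3 * e"
    using r[OF q(1)] q(3) by linarith
  obtain r' q' where "(r', q') \<in> ?P" and min: "cone_min L ?P y = r' + real L * dist y q'"
    using cone_min_attained[of ?P L y] Q(1) q(1) by blast
  then have q': "q' \<in> Q" "r' = r q'"
    by auto
  have "f y - 2 * e \<le> cone_min L ?P y"
  proof (cases "dist y q' < \<delta>")
    case True
    then have "f y - e < f q'"
      using uc[of q' y] by (simp add: dist_commute abs_less_iff)
    moreover have "f q' - e < r q'"
      using r[OF q'(1)] by (simp add: abs_less_iff)
    moreover have "0 \<le> real L * dist y q'"
      by simp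
    ultimately show ?thesis
      using min q'(2) by linarith
  next
    case False
    then have "real L * \<delta> \<le> real L * dist y q'"
      by (intro mult_left_mono) auto
    then show ?thesis
      using min q' r[OF q'(1)] L bound[of y] bound[of q'] by (simp add: abs_less_iff abs_le_iff)
  qed
  with upper show ?thesis
    by linarith
qed

lemma compact_countable_nets:
  assumes "compact (UNIV :: 'a set)"
  obtains D :: "'a::metric_space set" where "countable D"
    "\<And>\<delta>. 0 < \<delta> \<Longrightarrow> \<exists>Q\<subseteq>D. finite Q \<and> (\<forall>y. \<exists>q\<in>Q. dist y q < \<delta>)"
proof -
  have "\<exists>Q. finite Q \<and> (\<forall>y::'a. \<exists>q\<in>Q. dist y q < inverse (real (Suc m)))" for m
  proof -
    have "0 < inverse (real (Suc m))"
      by simp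
    then obtain Q :: "'a set" where Q: "finite Q" "UNIV \<subseteq> (\<Union>q\<in>Q. ball q (inverse (real (Suc m))))"
      using compact_eq_totally_bounded[THEN iffD1, OF assms] by blast
    have "\<exists>q\<in>Q. dist y q < inverse (real (Suc m))" for y
    proof -
      obtain q where "q \<in> Q" "y \<in> ball q (inverse (real (Suc m)))"
        using Q(2) by blast
      then show ?thesis
        by (auto simp: dist_commute)
    qed
    with Q(1) show ?thesis
      by blast
  qed
  then have "\<exists>net. \<forall>m. finite (net m) \<and> (\<forall>y::'a. \<exists>q\<in>net m. dist y q < inverse (real (Suc m)))"
    by (intro choice allI)
  then obtain net where "\<forall>m. finite (net m) \<and> (\<forall>y::'a. \<exists>q\<in>net m. dist y q < inverse (real (Suc m)))"
    by blast
  then have net: "\<And>m. finite (net m)" "\<And>m y. \<exists>q\<in>net m. dist y q < inverse (real (Suc m))"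
    by blast+
  show ?thesis
  proof (rule that[of "\<Union>m. net m"])
    show "countable (\<Union>m. net m)"
      using net(1) by (intro countable_UN) (auto intro: countable_finite)
    fix \<delta> :: real
    assume "0 < \<delta>"
    then obtain m where m: "inverse (real (Suc m)) < \<delta>"
      using reals_Archimedean by blast
    have "\<forall>y. \<exists>q\<in>net m. dist y q < \<delta>"
      using net(2)[of m] m by (meson order.strict_trans)
    then show "\<exists>Q\<subseteq>(\<Union>m. net m). finite Q \<and> (\<forall>y. \<exists>q\<in>Q. dist y q < \<delta>)"
      using net(1)[of m] by blast
  qed
qed

lemma exists_cone_min_approximation:
  fixes f :: "'a::metric_space \<Rightarrow> real"
  assumes cpt: "compact (UNIV :: 'a set)" and f: "continuous_on UNIV f" and \<epsilon>: "0 < \<epsilon>"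
    and D: "\<And>\<delta>. 0 < \<delta> \<Longrightarrow> \<exists>Q\<subseteq>D. finite Q \<and> (\<forall>y. \<exists>q\<in>Q. dist y q < \<delta>)"
  shows "\<exists>L P. finite P \<and> P \<noteq> {} \<and> P \<subseteq> \<rat> \<times> D \<and> (\<forall>y. \<bar>f y - cone_min L P y\<bar> \<le> \<epsilon>)"
proof -
  define e where "e = \<epsilon> / 3"
  have e: "0 < e"
    using \<epsilon> unfolding e_def by simp
  obtain B where B: "\<And>y. \<bar>f y\<bar> \<le> B"
    using continuous_bounded[OF cpt f] by blast
  obtain \<delta> where \<delta>: "0 < \<delta>" and uc: "\<And>y z. dist z y < \<delta> \<Longrightarrow> \<bar>f z - f y\<bar> < e"
    using compact_uniformly_continuous[OF f cpt] e
    unfolding uniformly_continuous_on_def dist_real_def by blast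
  obtain L :: nat where "(2 * B + e) / \<delta> < real L"
    using reals_Archimedean2 by blast
  then have L: "2 * B + e < real L * \<delta>"
    using \<delta> by (simp add: divide_less_eq mult.commute)
  have "0 < min \<delta> (e / (real L + 1))"
    using \<delta> e by simp
  then obtain Q where Q: "Q \<subseteq> D" "finite Q" "\<And>y. \<exists>q\<in>Q. dist y q < min \<delta> (e / (real L + 1))"
    using D by blast
  have net: "\<exists>q\<in>Q. dist y q < \<delta> \<and> real L * dist y q \<le> e" for y
  proof -
    obtain q where q: "q \<in> Q" "dist y q < \<delta>" "dist y q < e / (real L + 1)"
      using Q(3)[of y] by auto
    have "real L * dist y q \<le> (real L + 1) * (e / (real L + 1))"
      using q(3) by (intro mult_mono) auto
    then show ?thesis
      using q(1,2) by auto
  qed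
  have "\<forall>q. \<exists>r. r \<in> \<rat> \<and> \<bar>r - f q\<bar> < e"
  proof
    fix q
    obtain r where "r \<in> \<rat>" "f q - e < r" "r < f q + e"
      using Rats_dense_in_real[of "f q - e" "f q + e"] e by auto
    then show "\<exists>r. r \<in> \<rat> \<and> \<bar>r - f q\<bar> < e"
      by (intro exI[of _ r]) auto
  qed
  then obtain r where r: "\<And>q. r q \<in> \<rat>" "\<And>q. \<bar>r q - f q\<bar> < e"
    by metis
  have "Q \<noteq> {}"
    using Q(3) by blast
  moreover have "\<bar>f y - cone_min L ((\<lambda>q. (r q, q)) ` Q) y\<bar> \<le> \<epsilon>" for y
    using cone_min_approximates[OF uc B L Q(2) net r(2)] unfolding e_def by simp
  ultimately show ?thesis
    using Q(1,2) r(1) by (intro exI[of _ L] exI[of _ "(\<lambda>q. (r q, q)) ` Q"]) auto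
qed

lemma countable_dense_continuous_functions:
  assumes cpt: "compact (UNIV :: 'a set)"
  obtains g :: "nat \<Rightarrow> 'a::metric_space \<Rightarrow> real" where "\<And>j. continuous_on UNIV (g j)"
    "\<And>f \<epsilon>. continuous_on UNIV f \<Longrightarrow> 0 < \<epsilon> \<Longrightarrow> \<exists>j. \<forall>y. \<bar>f y - g j y\<bar> \<le> \<epsilon>"
proof -
  obtain D :: "'a set" where D: "countable D"
    "\<And>\<delta>. 0 < \<delta> \<Longrightarrow> \<exists>Q\<subseteq>D. finite Q \<and> (\<forall>y. \<exists>q\<in>Q. dist y q < \<delta>)"
    using compact_countable_nets[OF cpt] by blast
  define G where "G = (\<lambda>(L, P). cone_min L P) ` (UNIV \<times> {P. finite P \<and> P \<noteq> {} \<and> P \<subseteq> \<rat> \<times> D})"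
  have "countable {P. finite P \<and> P \<subseteq> \<rat> \<times> D}"
    using D(1) countable_rat by (intro countable_Collect_finite_subset countable_SIGMA)
  then have "countable G"
    unfolding G_def by (intro countable_image countable_SIGMA) (auto elim: countable_subset[rotated])
  have G_cont: "continuous_on UNIV g" if "g \<in> G" for g
    using that continuous_on_cone_min unfolding G_def by auto
  have approx: "\<exists>g\<in>G. \<forall>y. \<bar>f y - g y\<bar> \<le> \<epsilon>"
    if f: "continuous_on UNIV f" and \<epsilon>: "0 < \<epsilon>" for f \<epsilon>
  proof -
    obtain L P where P: "finite P" "P \<noteq> {}" "P \<subseteq> \<rat> \<times> D"
      and approx: "\<forall>y. \<bar>f y - cone_min L P y\<bar> \<le> \<epsilon>"
      using exists_cone_min_approximation[OF cpt f \<epsilon> D(2)] by blast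
    have "cone_min L P \<in> G"
      unfolding G_def using P by (intro image_eqI[of _ _ "(L, P)"]) auto
    with approx show ?thesis
      by blast
  qed
  have "\<exists>g\<in>G. \<forall>y. \<bar>0 - g y\<bar> \<le> 1"
    by (rule approx) (simp_all add: continuous_on_const)
  then have "G \<noteq> {}"
    by blast
  show ?thesis
  proof (rule that[of "from_nat_into G"])
    show "continuous_on UNIV (from_nat_into G j)" for j
      using G_cont from_nat_into[OF \<open>G \<noteq> {}\<close>] by blast
    show "\<exists>j. \<forall>y. \<bar>f y - from_nat_into G j y\<bar> \<le> \<epsilon>" if "continuous_on UNIV f" "0 < \<epsilon>" for f \<epsilon>
      using approx[OF that] from_nat_into_surj[OF \<open>countable G\<close>] by metis
  qed
qed

section \<open>Equidistribution along a subsequence\<close>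

lemma strict_mono_choice:
  assumes "\<And>k N. \<exists>n\<ge>N. P k n"
  obtains r :: "nat \<Rightarrow> nat" where "strict_mono r" "\<And>k. P k (r k)"
proof -
  define pick where "pick k N = (SOME n. N \<le> n \<and> P k n)" for k N
  have pick: "N \<le> pick k N" "P k (pick k N)" for k N
    using someI_ex[OF assms[of N k]] unfolding pick_def by auto
  define r where "r = rec_nat (pick 0 0) (\<lambda>k m. pick (Suc k) (Suc m))"
  have r_Suc: "r (Suc k) = pick (Suc k) (Suc (r k))" for k
    unfolding r_def by simp
  show ?thesis
  proof
    show "strict_mono r"
      using pick(1) by (intro strict_mono_Suc_iff[THEN iffD2] allI) (simp add: r_Suc Suc_le_lessD)
    show "P k (r k)" for k
      using pick(2) by (cases k) (simp_all add: r_def)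
  qed
qed

context compact_ergodic_system
begin

lemma integral_sum_birkhoff_deviation_tendsto:
  assumes "finite F" "\<And>f. f \<in> F \<Longrightarrow> continuous_on UNIV f"
  shows "(\<lambda>M. integral\<^sup>L \<nu> (\<lambda>y. \<Sum>f\<in>F. \<bar>birkhoff_sum T f M y / real M - integral\<^sup>L \<nu> f\<bar>))
    \<longlonglongrightarrow> 0"
proof -
  have "continuous_on UNIV (\<lambda>y. \<bar>birkhoff_sum T f M y / real M - integral\<^sup>L \<nu> f\<bar>)"
    if "f \<in> F" for f M
    using continuous_on_birkhoff_sum[OF continuous_T assms(2)[OF that]]
    unfolding divide_inverse by (intro continuous_intros) auto
  then have "integral\<^sup>L \<nu> (\<lambda>y. \<Sum>f\<in>F. \<bar>birkhoff_sum T f M y / real M - integral\<^sup>L \<nu> f\<bar>) =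
      (\<Sum>f\<in>F. integral\<^sup>L \<nu> (\<lambda>y. \<bar>birkhoff_sum T f M y / real M - integral\<^sup>L \<nu> f\<bar>))" for M
    using integrable_continuous by (intro Bochner_Integration.integral_sum) auto
  moreover have "(\<lambda>M. \<Sum>f\<in>F. integral\<^sup>L \<nu> (\<lambda>y. \<bar>birkhoff_sum T f M y / real M - integral\<^sup>L \<nu> f\<bar>))
      \<longlonglongrightarrow> 0"
    using assms(2) birkhoff_average_L1_tendsto by (intro tendsto_null_sum) auto
  ultimately show ?thesis
    by simp
qed

lemma exists_time_birkhoff_averages_close:
  assumes log: "\<And>f :: 'a \<Rightarrow> real. continuous_on UNIV f \<Longrightarrow>
      (\<lambda>k. integral\<^sup>L (Emp_log T x (Ns k)) f) \<longlonglongrightarrow> integral\<^sup>L \<nu> f"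
    and Ns: "strict_mono Ns" "\<And>k. 2 \<le> Ns k"
    and F: "finite F" "\<And>f. f \<in> F \<Longrightarrow> continuous_on UNIV f"
    and \<epsilon>: "0 < \<epsilon>"
  shows "\<exists>n\<ge>N0. 0 < n \<and> (\<forall>f\<in>F. \<bar>birkhoff_sum T f n x / real n - integral\<^sup>L \<nu> f\<bar> < \<epsilon>)"
proof -
  obtain B where B: "0 < B" "\<And>f y. f \<in> F \<Longrightarrow> \<bar>f y\<bar> \<le> B"
    using continuous_bounded_finite_family[OF compact_UNIV F] by blast
  define h where "h M y = (\<Sum>f\<in>F. \<bar>birkhoff_sum T f M y / real M - integral\<^sup>L \<nu> f\<bar>)" for M y
  have h_cont: "continuous_on UNIV (h M)" for M
    unfolding h_def divide_inverse using F(2) continuous_on_birkhoff_sum[OF continuous_T]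
    by (intro continuous_intros) auto
  have "eventually (\<lambda>M. 0 < M \<and> integral\<^sup>L \<nu> (h M) < \<epsilon> / 4) sequentially"
    using order_tendstoD(2)[OF integral_sum_birkhoff_deviation_tendsto[OF F], of "\<epsilon> / 4"] \<epsilon>
    unfolding h_def by (auto intro: eventually_conj eventually_gt_at_top)
  then obtain M where M: "0 < M" "integral\<^sup>L \<nu> (h M) < \<epsilon> / 4"
    by (auto simp: eventually_sequentially)
  obtain N1' :: nat where N1': "8 * real M * B / \<epsilon> < real N1'"
    using reals_Archimedean2 by blast
  define N1 where "N1 = max (max N0 1) N1'"
  have N1: "N0 \<le> N1" "1 \<le> N1" "8 * real M * B / \<epsilon> < real N1"
    using N1' unfolding N1_def by auto
  have Ns_ge_1: "1 \<le> Ns k" for k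
    using Ns(2)[of k] by simp
  have "eventually (\<lambda>k. integral\<^sup>L (Emp_log T x (Ns k)) (h M) < \<epsilon> / 4) sequentially"
    using order_tendstoD(2)[OF log[OF h_cont] M(2)] .
  then have log_small: "eventually (\<lambda>k.
      (\<Sum>n<Ns k. h M ((T ^^ n) x) / real (Suc n)) / ln (real (Ns k)) < \<epsilon> / 4) sequentially"
    using integral_Emp_log[OF borel_measurable_continuous_onI[OF h_cont] Ns_ge_1]
    by (auto elim!: eventually_mono)
  have h_nonneg: "0 \<le> h M y" for y
    unfolding h_def by (simp add: sum_nonneg)
  obtain n where n: "N1 \<le> n" "birkhoff_sum T (h M) n x < 2 * (\<epsilon> / 4) * real n"
    using exists_small_birkhoff_sum[OF h_nonneg N1(2) Ns(1) log_small] by blast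
  have "8 * real M * B < \<epsilon> * real N1"
    using N1(3) \<epsilon> by (simp add: divide_less_eq mult.commute)
  also have "\<dots> \<le> \<epsilon> * real n"
    using n(1) \<epsilon> by (intro mult_left_mono) auto
  finally have n_large: "8 * real M * B < \<epsilon> * real n" .
  have "\<bar>birkhoff_sum T f n x / real n - integral\<^sup>L \<nu> f\<bar> < \<epsilon>" if f: "f \<in> F" for f
  proof (rule birkhoff_average_close[OF B(2)[OF f] M(1) n_large])
    have "(\<Sum>s<n. \<bar>birkhoff_sum T f M ((T ^^ s) x) / real M - integral\<^sup>L \<nu> f\<bar>) \<le>
        birkhoff_sum T (h M) n x"
      unfolding birkhoff_sum_def[of T "h M"] h_def
      using F(1) f by (intro sum_mono member_le_sum) auto
    then show "(\<Sum>s<n. \<bar>birkhoff_sum T f M ((T ^^ s) x) / real M - integral\<^sup>L \<nu> f\<bar>) <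
        \<epsilon> / 2 * real n"
      using n(2) by linarith
  qed
  then show ?thesis
    using n(1) N1(1,2) by (intro exI[of _ n]) auto
qed

lemma weak_star_conv_Emp_of_dense:
  fixes g :: "nat \<Rightarrow> 'a \<Rightarrow> real"
  assumes g: "\<And>j. continuous_on UNIV (g j)"
    and dense: "\<And>f \<epsilon>. continuous_on UNIV f \<Longrightarrow> 0 < \<epsilon> \<Longrightarrow> \<exists>j. \<forall>y. \<bar>f y - g j y\<bar> \<le> \<epsilon>"
    and conv: "\<And>j. (\<lambda>k. birkhoff_sum T (g j) (r k) x / real (r k)) \<longlonglongrightarrow> integral\<^sup>L \<nu> (g j)"
  shows "weak_star_conv (\<lambda>k. Emp T x (r k)) \<nu>"
  unfolding weak_star_conv_def
proof (intro allI impI)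
  fix f :: "'a \<Rightarrow> real"
  assume f: "continuous_on UNIV f"
  show "(\<lambda>k. integral\<^sup>L (Emp T x (r k)) f) \<longlonglongrightarrow> integral\<^sup>L \<nu> f"
    unfolding integral_Emp[OF borel_measurable_continuous_onI[OF f]]
  proof (rule LIMSEQ_I)
    fix \<epsilon> :: real
    assume \<epsilon>: "0 < \<epsilon>"
    then obtain j where j: "\<And>y. \<bar>f y - g j y\<bar> \<le> \<epsilon> / 4"
      using dense[OF f, of "\<epsilon> / 4"] by auto
    obtain K where K: "\<And>k. K \<le> k \<Longrightarrow>
        \<bar>birkhoff_sum T (g j) (r k) x / real (r k) - integral\<^sup>L \<nu> (g j)\<bar> < \<epsilon> / 4"
      using LIMSEQ_D[OF conv[of j], of "\<epsilon> / 4"] \<epsilon> by auto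
    have "\<bar>integral\<^sup>L \<nu> f - integral\<^sup>L \<nu> (g j)\<bar> \<le> \<epsilon> / 4"
      by (rule integral_abs_diff_le[OF f g j])
    then have "norm (birkhoff_sum T f (r k) x / real (r k) - integral\<^sup>L \<nu> f) < \<epsilon>" if "K \<le> k" for k
      using K[OF that] birkhoff_average_abs_diff_le[of f "g j" "\<epsilon> / 4" T "r k" x, OF j]
      unfolding real_norm_def abs_le_iff abs_less_iff by linarith
    then show "\<exists>K. \<forall>k\<ge>K. norm (birkhoff_sum T f (r k) x / real (r k) - integral\<^sup>L \<nu> f) < \<epsilon>"
      by blast
  qed
qed

lemma exists_subsequence_birkhoff_averages_tendsto:
  fixes g :: "nat \<Rightarrow> 'a \<Rightarrow> real"
  assumes log: "\<And>f :: 'a \<Rightarrow> real. continuous_on UNIV f \<Longrightarrow>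
      (\<lambda>k. integral\<^sup>L (Emp_log T x (Ns k)) f) \<longlonglongrightarrow> integral\<^sup>L \<nu> f"
    and Ns: "strict_mono Ns" "\<And>k. 2 \<le> Ns k"
    and g: "\<And>j. continuous_on UNIV (g j)"
  obtains r where "strict_mono r" "\<And>k. 0 < r k"
    "\<And>j. (\<lambda>k. birkhoff_sum T (g j) (r k) x / real (r k)) \<longlonglongrightarrow> integral\<^sup>L \<nu> (g j)"
proof -
  define good where "good k n \<longleftrightarrow> 0 < n \<and> (\<forall>j\<le>k.
      \<bar>birkhoff_sum T (g j) n x / real n - integral\<^sup>L \<nu> (g j)\<bar> < inverse (real (Suc k)))" for k n
  have "\<exists>n\<ge>N. good k n" for k N
  proof -
    have "\<exists>n\<ge>N. 0 < n \<and> (\<forall>f\<in>g ` {..k}.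
        \<bar>birkhoff_sum T f n x / real n - integral\<^sup>L \<nu> f\<bar> < inverse (real (Suc k)))"
      by (rule exists_time_birkhoff_averages_close[OF log Ns]) (use g in auto)
    then show ?thesis
      unfolding good_def by auto
  qed
  then obtain r where r: "strict_mono r" "\<And>k. good k (r k)"
    using strict_mono_choice[of good] by blast
  have conv: "(\<lambda>k. birkhoff_sum T (g j) (r k) x / real (r k)) \<longlonglongrightarrow> integral\<^sup>L \<nu> (g j)" for j
  proof -
    have "eventually (\<lambda>k. norm (birkhoff_sum T (g j) (r k) x / real (r k) - integral\<^sup>L \<nu> (g j))
        \<le> inverse (real (Suc k))) sequentially"
      using eventually_ge_at_top[of j]
    proof (rule eventually_mono)
      fix k
      assume "j \<le> k"
      then show "norm (birkhoff_sum T (g j) (r k) x / real (r k) - integral\<^sup>L \<nu> (g j))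
          \<le> inverse (real (Suc k))"
        using r(2)[of k] unfolding good_def by auto
    qed
    from Lim_null_comparison[OF this LIMSEQ_inverse_real_of_nat] show ?thesis
      by (rule LIM_zero_cancel)
  qed
  have pos: "0 < r k" for k
    using r(2) unfolding good_def by blast
  show ?thesis
    by (rule that[OF r(1) pos conv])
qed

end

theorem corollary2p2:
  fixes T :: "'a::metric_space \<Rightarrow> 'a" and x :: 'a and \<nu> :: "'a measure"
  assumes "compact (UNIV :: 'a set)"
    and "continuous_on UNIV T"
    and "\<nu> \<in> V_log T x"
    and "ergodic T \<nu>"
  shows "\<nu> \<in> V T x"
proof -
  obtain Ns where \<nu>: "borel_prob \<nu>" and Ns: "strict_mono Ns" "\<And>k. 2 \<le> Ns k"
    and log: "weak_star_conv (\<lambda>k. Emp_log T x (Ns k)) \<nu>"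
    using assms(3) unfolding V_log_def by blast
  interpret compact_ergodic_system T \<nu>
    using assms(1,2,4) \<nu> by unfold_locales
  obtain g :: "nat \<Rightarrow> 'a \<Rightarrow> real" where g: "\<And>j. continuous_on UNIV (g j)"
    and dense: "\<And>f \<epsilon>. continuous_on UNIV f \<Longrightarrow> 0 < \<epsilon> \<Longrightarrow> \<exists>j. \<forall>y. \<bar>f y - g j y\<bar> \<le> \<epsilon>"
    using countable_dense_continuous_functions[OF assms(1)] by blast
  have log_conv: "(\<lambda>k. integral\<^sup>L (Emp_log T x (Ns k)) f) \<longlonglongrightarrow> integral\<^sup>L \<nu> f"
    if "continuous_on UNIV f" for f :: "'a \<Rightarrow> real"
    using log that unfolding weak_star_conv_def by blast
  obtain r where r: "strict_mono r" "\<And>k. 0 < r k"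
    and conv: "\<And>j. (\<lambda>k. birkhoff_sum T (g j) (r k) x / real (r k)) \<longlonglongrightarrow> integral\<^sup>L \<nu> (g j)"
    using exists_subsequence_birkhoff_averages_tendsto[where g=g, OF log_conv Ns g] by blast
  have "weak_star_conv (\<lambda>k. Emp T x (r k)) \<nu>"
    by (rule weak_star_conv_Emp_of_dense[OF g dense conv])
  then show ?thesis
    unfolding V_def using \<nu> r by (auto simp: Suc_le_eq)
qed

end
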